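(* The Schur complement can be reexpressed as \[ S_N^{\omega}(\alpha,\beta,\lambda)=\phi(\alpha,\beta,\lambda)\big(\mathcal{L}_{N-1}^{\Omega}-R(\alpha,\beta,\lambda)\big)\qquad (\lambda\in \mathbb{R}), \] where $\mathcal{L}^\Omega_{N-1}$ is the magnetic Laplacian on $V_{N-1}$ with $U(1)$ connection $\Omega$, a self-adjoint operator on $L^2(V_{N-1}, \deg_{G_{N-1}})$, and $R(\alpha,\beta,\lambda)$ is the spectral decimation function. Specifically: (Case 1) If $\mathbb{R}\ni\lambda\mapsto \Psi(\alpha,\beta,\lambda)$ is $\mathbb{R}$-valued, then \[ \phi(\alpha,\beta,\lambda)=\frac{\Psi(\alpha,\beta,\lambda)}{4\mathcal{D}(\beta,\lambda)},\quad R(\alpha,\beta,\lambda)=1+\frac{A(\alpha,\beta,\lambda)-64\mathcal{D}(\beta,\lambda)(1-\lambda)}{16\Psi(\alpha,\beta,\lambda)},\quad \Omega_{ab}(\alpha,\beta)=\omega_{ac}\omega_{cb}. \] (Case 2) If $\mathbb{R}\ni\lambda\mapsto \Psi(\alpha,\beta,\lambda)$ is $\mathbb{C}$-valued, then \[ \phi(\alpha,\beta,\lambda)=\frac{|\Psi(\alpha,\beta,\lambda)|}{4\mathcal{D}(\beta,\lambda)},\quad R(\alpha,\beta,\lambda)=1+\frac{A(\alpha,\beta,\lambda)-64\mathcal{D}(\beta,\lambda)(1-\lambda)}{16|\Psi(\alpha,\beta,\lambda)|}, \] \[ \theta(\alpha,\beta,\lambda)=\frac{\arg \Psi(\alpha,\beta,\lambda)}{2\pi}\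 (\arg:\mathbb{C}\to[0,2\pi)),\quad \Omega_{ab}(\alpha,\beta,\lambda)=\omega_{ac}\omega_{cb}e^{2\pi i\theta(\alpha,\beta,\lambda)}. \] In both cases, $a\sim c\sim b$ (with $c\in V_N\setminus V_{N-1}$ the midpoint of $a,b$), and the upright cell to which the edge $ab$ belongs is traversed counterclockwise.
   Context: Let $G_N=(V_N,E_N)$ be the level-$N$ Sierpinski gasket graph, $V_0$ its three corners, $V_{N-1}\subset V_N$ the vertices of the nested level-$(N-1)$ graph. Let $\omega$ be a $U(1)$ connection on $G_N$ with magnetic flux $\alpha$ through every upright unit triangle and $\beta$ through every downright unit triangle. The magnetic Laplacian $\mathcal{L}^\omega_N$ has entries $1$ on the diagonal, $-\tfrac12\omega_{xy}$ if $x\in V_0$, $y\sim x$, $-\tfrac14\omega_{xy}$ if $x\in V_N\setminus V_0$, $y\sim x$, and $0$ otherwise; for a general connection $\Omega$ on $G_{N-1}$, $\mathcal{L}^\Omega_{N-1}$ is defined analogously on $G_{N-1}$. Writing $\mathcal{L}^\omega_N-\lambda I=\begin{bmatrix}A-\lambda I & B\\ C & D-\lambda I\end{bmatrix}$ with respect to $V_N=V_{N-1}\sqcup(V_N\setminus V_{N-1})$, the Schur complement is $S_N^{\omega}(\alpha,\beta,\lambda)=(A-\lambda I)-B(D-\lambda I)^{-1}C$. The functions are $A(\alpha,\beta,\lambda)=16\lambda^2-(32+4\cos(2\pi\alpha))\lambda+15+4\cos(2\pi\alpha)+\cos(2\pi(\alpha+\beta))$, $\mathcal{D}(\beta,\lambda)=-\lambda^3+3\lambda^2-\tfrac{45}{16}\lambda+\tfrac{13}{16}-\tfrac{1}{32}\cos(2\pi\beta)$,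 $\Psi(\alpha,\beta,\lambda)=(1-\lambda)^2-\tfrac{1}{16}+\tfrac{1-\lambda}{4}(2e^{-2\pi i\alpha}+e^{-2\pi i(2\alpha+\beta)})+\tfrac{1}{16}(e^{-4\pi i \alpha}+2e^{-2\pi i (\alpha+\beta)})$. The identity holds for real $\lambda$ where the expressions are defined (e.g. $\mathcal{D}(\beta,\lambda)\neq0$, $\Psi(\alpha,\beta,\lambda)\neq 0$). *)

theory Defs
  imports "HOL-Analysis.Analysis"
begin

text \<open>Vertices of G_N are lattice points (i,j) (position i*e1 + j*e2 with e1 = (1,0),
  e2 = (1/2, sqrt 3/2)), the whole gasket having side length 2^N.
  An upright unit cell is given by its lower-left corner p; its vertices are
  p, p+e1, p+e2, and p -> p+e1 -> p+e2 -> p is counterclockwise.\<close>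

type_synonym vtx = "nat \<times> nat"
type_synonym conn = "vtx \<Rightarrow> vtx \<Rightarrow> complex"

fun SG_cells :: "nat \<Rightarrow> vtx set" where
  "SG_cells 0 = {(0,0)}"
| "SG_cells (Suc n) = SG_cells n \<union> (\<lambda>(i,j). (i + 2^n, j)) ` SG_cells n
                        \<union> (\<lambda>(i,j). (i, j + 2^n)) ` SG_cells n"

definition cell_vertices :: "vtx \<Rightarrow> vtx set" where
  "cell_vertices p = {p, (fst p + 1, snd p), (fst p, snd p + 1)}"

definition SG_V :: "nat \<Rightarrow> vtx set" where
  "SG_V n = (\<Union>p\<in>SG_cells n. cell_vertices p)"

definition SG_adj :: "nat \<Rightarrow> vtx \<Rightarrow> vtx \<Rightarrow> bool" where
  "SG_adj n x y \<longleftrightarrow> x \<noteq> y \<and> (\<exists>p\<in>SG_cells n. x \<in> cell_vertices p \<and> y \<in> cell_vertices p)"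

definition SG_V0 :: "nat \<Rightarrow> vtx set" where
  "SG_V0 n = {(0,0), (2^n, 0), (0, 2^n)}"

text \<open>Embedding of G_{N-1} into G_N: V_{N-1} sits inside V_N as the points with even coordinates.\<close>
definition emb :: "vtx \<Rightarrow> vtx" where
  "emb a = (2 * fst a, 2 * snd a)"

definition SG_Vold :: "nat \<Rightarrow> vtx set" where
  "SG_Vold N = emb ` SG_V (N - 1)"

definition U1_connection :: "nat \<Rightarrow> conn \<Rightarrow> bool" where
  "U1_connection n \<omega> \<longleftrightarrow>
     (\<forall>x y. SG_adj n x y \<longrightarrow> cmod (\<omega> x y) = 1 \<and> \<omega> y x = inverse (\<omega> x y))"

definition up_holonomy :: "conn \<Rightarrow> vtx \<Rightarrow> complex" where
  "up_holonomy \<omega> p = (let x = p; y = (fst p + 1, snd p); z = (fst p, snd p + 1)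
                       in \<omega> x y * \<omega> y z * \<omega> z x)"

definition is_down_triangle :: "nat \<Rightarrow> vtx \<Rightarrow> bool" where
  "is_down_triangle n q \<longleftrightarrow>
     (let x = (fst q + 1, snd q); y = (fst q + 1, snd q + 1); z = (fst q, snd q + 1)
      in SG_adj n x y \<and> SG_adj n y z \<and> SG_adj n z x)"

definition down_holonomy :: "conn \<Rightarrow> vtx \<Rightarrow> complex" where
  "down_holonomy \<omega> q = (let x = (fst q + 1, snd q); y = (fst q + 1, snd q + 1); z = (fst q, snd q + 1)
                         in \<omega> x y * \<omega> y z * \<omega> z x)"

definition mag_lap :: "nat \<Rightarrow> conn \<Rightarrow> vtx \<Rightarrow> vtx \<Rightarrow> complex" where
  "mag_lap n \<omega> x y =
     (if x = y then 1
      else if SG_adj n x y then (if x \<in> SG_V0 n then - (1/2) * \<omega> x y else - (1/4) * \<omega> x y)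
      else 0)"

definition inverse_on :: "'a set \<Rightarrow> ('a \<Rightarrow> 'a \<Rightarrow> complex) \<Rightarrow> ('a \<Rightarrow> 'a \<Rightarrow> complex) \<Rightarrow> bool" where
  "inverse_on S M M' \<longleftrightarrow>
     (\<forall>x\<in>S. \<forall>y\<in>S. (\<Sum>z\<in>S. M x z * M' z y) = (if x = y then 1 else 0)
                 \<and> (\<Sum>z\<in>S. M' x z * M z y) = (if x = y then 1 else 0))"

definition mat_inv_on :: "'a set \<Rightarrow> ('a \<Rightarrow> 'a \<Rightarrow> complex) \<Rightarrow> ('a \<Rightarrow> 'a \<Rightarrow> complex)" where
  "mat_inv_on S M = (SOME M'. inverse_on S M M')"

text \<open>S_N = (A - lam I) - B (D - lam I)^{-1} C, blocks w.r.t. V_N = V_{N-1} \<union> (V_N - V_{N-1});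
  its entries are indexed by V_{N-1} (inside V_N).\<close>
definition schur_compl :: "nat \<Rightarrow> conn \<Rightarrow> real \<Rightarrow> vtx \<Rightarrow> vtx \<Rightarrow> complex" where
  "schur_compl N \<omega> lam x y =
     (let M = (\<lambda>u v. mag_lap N \<omega> u v - (if u = v then complex_of_real lam else 0));
          I = SG_V N - SG_Vold N;
          Dinv = mat_inv_on I M
      in M x y - (\<Sum>z\<in>I. \<Sum>w\<in>I. M x z * Dinv z w * M w y))"

definition A_fun :: "real \<Rightarrow> real \<Rightarrow> real \<Rightarrow> real" where
  "A_fun \<alpha> \<beta> lam = 16 * lam^2 - (32 + 4 * cos (2*pi*\<alpha>)) * lam + 15 + 4 * cos (2*pi*\<alpha>)
                      + cos (2*pi*(\<alpha> + \<beta>))"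

definition D_fun :: "real \<Rightarrow> real \<Rightarrow> real" where
  "D_fun \<beta> lam = - (lam^3) + 3 * lam^2 - (45/16) * lam + 13/16 - (1/32) * cos (2*pi*\<beta>)"

definition Psi_fun :: "real \<Rightarrow> real \<Rightarrow> real \<Rightarrow> complex" where
  "Psi_fun \<alpha> \<beta> lam =
     (1 - of_real lam)^2 - 1/16
     + ((1 - of_real lam) / 4) * (2 * exp (- 2 * of_real pi * \<i> * of_real \<alpha>)
                                 + exp (- 2 * of_real pi * \<i> * of_real (2*\<alpha> + \<beta>)))
     + (1/16) * (exp (- 4 * of_real pi * \<i> * of_real \<alpha>) + 2 * exp (- 2 * of_real pi * \<i> * of_real (\<alpha> + \<beta>)))"

definition arg02 :: "complex \<Rightarrow> real" where
  "arg02 z = (if Arg z < 0 then Arg z + 2 * pi else Arg z)"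

text \<open>a -> b is counterclockwise in the upright cell containing the edge ab
  (edge direction e1, e2 - e1 or -e2).\<close>
definition ccw_edge :: "vtx \<Rightarrow> vtx \<Rightarrow> bool" where
  "ccw_edge a b \<longleftrightarrow>
     (fst b = fst a + 1 \<and> snd b = snd a)
   \<or> (fst a = fst b + 1 \<and> snd b = snd a + 1)
   \<or> (fst b = fst a \<and> snd a = snd b + 1)"

text \<open>Omega_ab = omega_ac omega_cb e^{2 pi i theta} for ab traversed counterclockwise in its cell
  (c = midpoint of a, b in G_N); for the reverse orientation the conjugate phase, so that
  Omega_ba = inverse Omega_ab.\<close>
definition Omega :: "conn \<Rightarrow> real \<Rightarrow> conn" where
  "Omega \<omega> \<theta> a b =
     (let c = (fst a + fst b, snd a + snd b)
      in \<omega> (emb a) c * \<omega> c (emb b) *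
         (if ccw_edge a b then exp (2 * of_real pi * \<i> * of_real \<theta>)
          else exp (- 2 * of_real pi * \<i> * of_real \<theta>)))"

end

theory Submission
  imports Defs
begin

(* Every vertex of V_N - V_{N-1} is the midpoint of an edge of a unique cell p of G_{N-1}, and
   midpoints belonging to different cells are never adjacent.  So D - lam I is block diagonal,
   its blocks being the magnetic Laplacians of the "midpoint triangles" (flux beta), whose inverse
   is the adjugate over the determinant D(beta, lam).  Hence B (D - lam I)^{-1} C is a sum of
   contributions of single cells.  Inside one cell the upright holonomy alpha of the three child
   cells collapses the sum over the paths a -> z -> w -> b through the midpoint triangle to a
   multiple of omega_ac omega_cb: Psi/D if ab is counterclockwise, its conjugate if clockwise,
   and A/(8 D) if a = b.  The degree weights (1/2 at a corner, which lies in one cell, 1/4 at a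
   vertex lying in two) make the diagonal the same everywhere, and writing Psi = |Psi| e^{2 pi i theta}
   moves the phase into Omega. *)

section \<open>Refining the gasket\<close>

definition plus_e1 :: "vtx \<Rightarrow> vtx" where "plus_e1 p = (fst p + 1, snd p)"

definition plus_e2 :: "vtx \<Rightarrow> vtx" where "plus_e2 p = (fst p, snd p + 1)"

(* In the coordinates of G_(n+1), mid a b is the midpoint of emb a and emb b, and mid01 p, mid12 p,
   mid20 p are the midpoints of the edges of the cell p, in counterclockwise order. *)
definition mid :: "vtx \<Rightarrow> vtx \<Rightarrow> vtx" where "mid a b = (fst a + fst b, snd a + snd b)"

definition mid01 :: "vtx \<Rightarrow> vtx" where "mid01 p = mid p (plus_e1 p)"

definition mid12 :: "vtx \<Rightarrow> vtx" where "mid12 p = mid (plus_e1 p) (plus_e2 p)"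

definition mid20 :: "vtx \<Rightarrow> vtx" where "mid20 p = mid (plus_e2 p) p"

lemmas point_defs = plus_e1_def plus_e2_def mid_def mid01_def mid12_def mid20_def emb_def

definition children :: "vtx \<Rightarrow> vtx set" where "children p = {emb p, mid01 p, mid20 p}"

definition mid_vertices :: "vtx \<Rightarrow> vtx set" where "mid_vertices p = {mid01 p, mid12 p, mid20 p}"

definition refined_cell :: "vtx \<Rightarrow> vtx set" where
  "refined_cell p = {emb p, emb (plus_e1 p), emb (plus_e2 p), mid01 p, mid12 p, mid20 p}"

definition parent :: "vtx \<Rightarrow> vtx" where "parent x = (fst x div 2, snd x div 2)"

definition lattice_nbr :: "vtx \<Rightarrow> vtx \<Rightarrow> bool" where
  "lattice_nbr x y \<longleftrightarrow>
     (fst y = fst x + 1 \<and> snd y = snd x) \<or> (fst x = fst y + 1 \<and> snd y = snd x)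
   \<or> (snd y = snd x + 1 \<and> fst y = fst x) \<or> (snd x = snd y + 1 \<and> fst y = fst x)
   \<or> (fst y = fst x + 1 \<and> snd x = snd y + 1) \<or> (fst x = fst y + 1 \<and> snd y = snd x + 1)"

lemma cell_vertices_eq: "cell_vertices p = {p, plus_e1 p, plus_e2 p}"
  by (simp add: cell_vertices_def plus_e1_def plus_e2_def)

lemma mid_vertices_distinct [simp]:
  "mid01 p \<noteq> mid12 p" "mid12 p \<noteq> mid20 p" "mid01 p \<noteq> mid20 p"
  "mid12 p \<noteq> mid01 p" "mid20 p \<noteq> mid12 p" "mid20 p \<noteq> mid01 p"
  by (auto simp: point_defs)

lemma SG_cells_Suc_children: "SG_cells (Suc n) = (\<Union>p\<in>SG_cells n. children p)"
proof (induction n)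
  case 0
  show ?case by (simp add: SG_cells.simps children_def point_defs) blast
next
  case (Suc n)
  have shift1: "(\<lambda>(i,j). (i + 2^Suc n, j)) ` (\<Union>p\<in>S. children p)
      = (\<Union>p\<in>(\<lambda>(i,j). (i + 2^n, j)) ` S. children p)" for S
    by (auto simp: children_def point_defs image_iff; force)
  have shift2: "(\<lambda>(i,j). (i, j + 2^Suc n)) ` (\<Union>p\<in>S. children p)
      = (\<Union>p\<in>(\<lambda>(i,j). (i, j + 2^n)) ` S. children p)" for S
    by (auto simp: children_def point_defs image_iff; force)
  have "SG_cells (Suc (Suc n)) = SG_cells (Suc n) \<union> (\<lambda>(i,j). (i + 2^Suc n, j)) ` SG_cells (Suc n)
      \<union> (\<lambda>(i,j). (i, j + 2^Suc n)) ` SG_cells (Suc n)"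
    by (rule SG_cells.simps(2))
  also have "\<dots> = (\<Union>p\<in>SG_cells n. children p) \<union> (\<Union>p\<in>(\<lambda>(i,j). (i + 2^n, j)) ` SG_cells n. children p)
      \<union> (\<Union>p\<in>(\<lambda>(i,j). (i, j + 2^n)) ` SG_cells n. children p)"
    by (simp only: Suc shift1 shift2)
  also have "\<dots> = (\<Union>p\<in>SG_cells (Suc n). children p)"
    by (simp only: SG_cells.simps(2) UN_Un)
  finally show ?case .
qed

declare SG_cells.simps(2) [simp del]

lemma finite_SG_cells: "finite (SG_cells n)"
  by (induction n) (auto simp: SG_cells_Suc_children children_def)

lemma cell_vertices_children:
  "cell_vertices (emb p) = {emb p, mid01 p, mid20 p}"
  "cell_vertices (mid01 p) = {mid01 p, emb (plus_e1 p), mid12 p}"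
  "cell_vertices (mid20 p) = {mid20 p, mid12 p, emb (plus_e2 p)}"
  by (auto simp: cell_vertices_def point_defs)

lemma refined_cell_eq: "refined_cell p = emb ` cell_vertices p \<union> mid_vertices p"
  by (auto simp: refined_cell_def mid_vertices_def cell_vertices_eq)

lemma refined_cell_children: "refined_cell p = (\<Union>c\<in>children p. cell_vertices c)"
  by (auto simp: refined_cell_def children_def cell_vertices_children)

lemma mid_vertices_ne_emb [simp]:
  "mid01 p \<noteq> emb q" "mid12 p \<noteq> emb q" "mid20 p \<noteq> emb q"
  "emb q \<noteq> mid01 p" "emb q \<noteq> mid12 p" "emb q \<noteq> mid20 p"
  by (auto simp: point_defs prod_eq_iff) presburger+

lemma mid_vertices_not_emb: "x \<in> mid_vertices p \<Longrightarrow> x \<notin> range emb"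
  by (auto simp: mid_vertices_def)

lemma parent_mid_vertices: "x \<in> mid_vertices p \<Longrightarrow> parent x = p"
  by (auto simp: mid_vertices_def parent_def point_defs)

lemma emb_eq_iff: "emb a = emb b \<longleftrightarrow> a = b"
  by (auto simp: emb_def prod_eq_iff)

lemma emb_in_refined_cell_iff: "emb b \<in> refined_cell p \<longleftrightarrow> b \<in> cell_vertices p"
  using mid_vertices_not_emb[of "emb b" p] by (auto simp: refined_cell_eq emb_eq_iff)

lemma new_vertex_in_refined_cell: "x \<in> refined_cell p \<Longrightarrow> x \<notin> range emb \<Longrightarrow> x \<in> mid_vertices p"
  by (auto simp: refined_cell_eq)

lemma SG_V_Suc: "SG_V (Suc n) = (\<Union>p\<in>SG_cells n. refined_cell p)"
  by (simp add: SG_V_def SG_cells_Suc_children refined_cell_children UN_UN_flatten)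

lemma new_vertices_Suc: "SG_V (Suc n) - SG_Vold (Suc n) = (\<Union>p\<in>SG_cells n. mid_vertices p)"
proof -
  have "SG_Vold (Suc n) = (\<Union>p\<in>SG_cells n. emb ` cell_vertices p)"
    by (simp add: SG_Vold_def SG_V_def image_UN)
  then show ?thesis
    using mid_vertices_not_emb unfolding SG_V_Suc refined_cell_eq by fastforce
qed

lemma lattice_nbr_cell_vertices:
  "x \<in> cell_vertices c \<Longrightarrow> y \<in> cell_vertices c \<Longrightarrow> x \<noteq> y \<Longrightarrow> lattice_nbr x y"
  by (auto simp: cell_vertices_def lattice_nbr_def)

lemma lattice_nbr_sym: "lattice_nbr x y \<longleftrightarrow> lattice_nbr y x"
  by (auto simp: lattice_nbr_def)

lemma SG_adj_lattice_nbr: "SG_adj n x y \<Longrightarrow> lattice_nbr x y"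
  by (auto simp: SG_adj_def intro: lattice_nbr_cell_vertices)

lemma lattice_nbr_in_child:
  assumes "x \<in> refined_cell p" "y \<in> refined_cell p" "lattice_nbr x y"
  shows "\<exists>c\<in>children p. x \<in> cell_vertices c \<and> y \<in> cell_vertices c"
  using assms unfolding refined_cell_def
  by (simp only: insert_iff empty_iff simp_thms, elim disjE)
     (simp_all add: lattice_nbr_def point_defs cell_vertices_def children_def)

lemma SG_adj_Suc_iff:
  "SG_adj (Suc n) x y \<longleftrightarrow>
     x \<noteq> y \<and> (\<exists>p\<in>SG_cells n. x \<in> refined_cell p \<and> y \<in> refined_cell p \<and> lattice_nbr x y)"
proof
  assume adj: "SG_adj (Suc n) x y"
  then show "x \<noteq> y \<and> (\<exists>p\<in>SG_cells n. x \<in> refined_cell p \<and> y \<in> refined_cell p \<and> lattice_nbr x y)"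
    using SG_adj_lattice_nbr[OF adj]
    unfolding SG_adj_def SG_cells_Suc_children refined_cell_children by blast
next
  assume "x \<noteq> y \<and> (\<exists>p\<in>SG_cells n. x \<in> refined_cell p \<and> y \<in> refined_cell p \<and> lattice_nbr x y)"
  then show "SG_adj (Suc n) x y"
    using lattice_nbr_in_child unfolding SG_adj_def SG_cells_Suc_children by blast
qed

lemma SG_adj_sym: "SG_adj n x y \<Longrightarrow> SG_adj n y x"
  by (auto simp: SG_adj_def)

lemma SG_adj_mid_vertex_iff:
  assumes "p \<in> SG_cells n" "z \<in> mid_vertices p"
  shows "SG_adj (Suc n) x z \<longleftrightarrow> x \<noteq> z \<and> x \<in> refined_cell p \<and> lattice_nbr x z"
proof -
  have "q = p" if "q \<in> SG_cells n" "z \<in> refined_cell q" for q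
    using new_vertex_in_refined_cell[OF that(2) mid_vertices_not_emb[OF assms(2)]]
      parent_mid_vertices assms(2) by metis
  then show ?thesis
    using assms refined_cell_eq unfolding SG_adj_Suc_iff by blast
qed

lemma emb_not_adjacent:
  assumes "a \<noteq> b" shows "\<not> SG_adj N (emb a) (emb b)"
proof
  assume "SG_adj N (emb a) (emb b)"
  then have "lattice_nbr (emb a) (emb b)" by (rule SG_adj_lattice_nbr)
  then show False using assms by (auto simp: lattice_nbr_def emb_def) presburger+
qed

lemma SG_V0_Suc_in_range_emb: "x \<in> SG_V0 (Suc n) \<Longrightarrow> x \<in> range emb"
proof -
  have "(2 ^ Suc n, 0) = emb (2 ^ n, 0)" "(0, 2 ^ Suc n) = emb (0, 2 ^ n)" "(0, 0) = emb (0, 0)"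
    by (simp_all add: emb_def)
  then show "x \<in> SG_V0 (Suc n) \<Longrightarrow> x \<in> range emb" by (auto simp: SG_V0_def)
qed

lemma emb_in_SG_V0_Suc_iff: "emb b \<in> SG_V0 (Suc n) \<longleftrightarrow> b \<in> SG_V0 n"
  by (auto simp: SG_V0_def emb_def prod_eq_iff)

lemma cells_containing_mid_vertex:
  assumes "p \<in> SG_cells n" "z \<in> mid_vertices p"
  shows "card {c \<in> SG_cells (Suc n). z \<in> cell_vertices c} = 2"
proof -
  have "{c \<in> SG_cells (Suc n). z \<in> cell_vertices c} = {c \<in> children p. z \<in> cell_vertices c}"
  proof safe
    fix c assume "c \<in> SG_cells (Suc n)" "z \<in> cell_vertices c"
    then obtain q where "q \<in> SG_cells n" "c \<in> children q" "z \<in> refined_cell q"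
      by (auto simp: SG_cells_Suc_children refined_cell_children)
    then show "c \<in> children p"
      using new_vertex_in_refined_cell mid_vertices_not_emb parent_mid_vertices assms(2) by metis
  qed (use assms(1) in \<open>auto simp: SG_cells_Suc_children\<close>)
  also have "\<dots> = (if z = mid01 p then {emb p, mid01 p} else if z = mid12 p then {mid01 p, mid20 p}
                     else {emb p, mid20 p})"
    using assms(2) by (auto simp: mid_vertices_def children_def cell_vertices_children)
  also have "card \<dots> = 2"
    by (simp add: point_defs)
  finally show ?thesis .
qed

lemma mid_cell_vertices:
  "mid p p = emb p" "mid p (plus_e1 p) = mid01 p" "mid p (plus_e2 p) = mid20 p"
  by (simp_all add: point_defs)

lemma children_eq_image: "children p = mid p ` cell_vertices p"
  by (simp add: children_def cell_vertices_eq mid_cell_vertices)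

lemma emb_in_child_iff:
  assumes "b' \<in> cell_vertices p"
  shows "emb b \<in> cell_vertices (mid p b') \<longleftrightarrow> b = b'"
proof -
  from assms consider "b' = p" | "b' = plus_e1 p" | "b' = plus_e2 p"
    by (auto simp: cell_vertices_eq)
  then show ?thesis
    by cases (simp_all add: mid_cell_vertices cell_vertices_children emb_eq_iff)
qed

lemma cells_containing_emb:
  "{c \<in> SG_cells (Suc n). emb b \<in> cell_vertices c} = (\<lambda>p. mid p b) ` {p \<in> SG_cells n. b \<in> cell_vertices p}"
proof (intro set_eqI iffI)
  fix c assume "c \<in> {c \<in> SG_cells (Suc n). emb b \<in> cell_vertices c}"
  then have "c \<in> (\<Union>p\<in>SG_cells n. mid p ` cell_vertices p)" "emb b \<in> cell_vertices c"
    by (simp_all add: SG_cells_Suc_children children_eq_image)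
  then obtain p b' where "p \<in> SG_cells n" "b' \<in> cell_vertices p" "c = mid p b'"
    "emb b \<in> cell_vertices c" by blast
  moreover from this have "b = b'" using emb_in_child_iff by simp
  ultimately show "c \<in> (\<lambda>p. mid p b) ` {p \<in> SG_cells n. b \<in> cell_vertices p}" by blast
next
  fix c assume "c \<in> (\<lambda>p. mid p b) ` {p \<in> SG_cells n. b \<in> cell_vertices p}"
  then obtain p where p: "p \<in> SG_cells n" "b \<in> cell_vertices p" "c = mid p b" by blast
  then have "c \<in> (\<Union>p\<in>SG_cells n. mid p ` cell_vertices p)" by blast
  then show "c \<in> {c \<in> SG_cells (Suc n). emb b \<in> cell_vertices c}"
    using emb_in_child_iff[OF p(2)] p(3) by (simp add: SG_cells_Suc_children children_eq_image)
qed

lemma card_cells_containing: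
  "a \<in> SG_V n \<Longrightarrow> card {p \<in> SG_cells n. a \<in> cell_vertices p} = (if a \<in> SG_V0 n then 1 else 2)"
proof (induction n arbitrary: a)
  case 0
  then have "a \<in> cell_vertices (0, 0)" by (simp add: SG_V_def)
  then have "a \<in> SG_V0 0" and "{p \<in> SG_cells 0. a \<in> cell_vertices p} = {(0, 0)}"
    by (auto simp: SG_V0_def cell_vertices_def)
  then show ?case by simp
next
  case (Suc n)
  from Suc.prems obtain p where p: "p \<in> SG_cells n" "a \<in> refined_cell p" by (auto simp: SG_V_Suc)
  show ?case
  proof (cases "a \<in> range emb")
    case False
    then have "a \<in> mid_vertices p" using p new_vertex_in_refined_cell by blast
    moreover have "a \<notin> SG_V0 (Suc n)" using False SG_V0_Suc_in_range_emb by blast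
    ultimately show ?thesis using cells_containing_mid_vertex p by simp
  next
    case True
    then obtain b where a: "a = emb b" by blast
    then have b: "b \<in> SG_V n" using p emb_in_refined_cell_iff by (auto simp: SG_V_def)
    have "inj (\<lambda>p. mid p b)" by (auto simp: inj_def mid_def prod_eq_iff)
    then have "card {c \<in> SG_cells (Suc n). a \<in> cell_vertices c} = card {p \<in> SG_cells n. b \<in> cell_vertices p}"
      unfolding a cells_containing_emb by (simp add: card_image inj_on_subset)
    then show ?thesis using Suc.IH[OF b] a emb_in_SG_V0_Suc_iff by simp
  qed
qed

lemma card_cells_containing_edge:
  assumes "a \<noteq> b"
  shows "card {p \<in> SG_cells n. a \<in> cell_vertices p \<and> b \<in> cell_vertices p} = (if SG_adj n a b then 1 else 0)"
proof (cases "SG_adj n a b")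
  case True
  then obtain p where p: "p \<in> SG_cells n" "a \<in> cell_vertices p" "b \<in> cell_vertices p"
    by (auto simp: SG_adj_def)
  have "q = p" if "a \<in> cell_vertices q" "b \<in> cell_vertices q" for q
    using assms p(2,3) that by (cases p; cases q; auto simp: cell_vertices_def)
  then have "{p \<in> SG_cells n. a \<in> cell_vertices p \<and> b \<in> cell_vertices p} = {p}"
    using p by blast
  then show ?thesis using True by simp
next
  case False
  then have "{p \<in> SG_cells n. a \<in> cell_vertices p \<and> b \<in> cell_vertices p} = {}"
    using assms unfolding SG_adj_def by blast
  then show ?thesis using False by (metis card.empty)
qed

section \<open>Inverses of block-diagonal matrices\<close>

lemma mat_inv_on_eqI:
  assumes fin: "finite S" and K: "inverse_on S M K" and x: "x \<in> S" and y: "y \<in> S"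
  shows "mat_inv_on S M x y = K x y"
proof -
  define K' where "K' = mat_inv_on S M"
  have K': "inverse_on S M K'" unfolding K'_def mat_inv_on_def using K by (metis someI)
  have right: "(\<Sum>w\<in>S. M z w * K w y) = (if z = y then 1 else 0)" if "z \<in> S" for z
    using K that y unfolding inverse_on_def by blast
  have left: "(\<Sum>z\<in>S. K' x z * M z w) = (if x = w then 1 else 0)" if "w \<in> S" for w
    using K' x that unfolding inverse_on_def by blast
  have "K' x y = (\<Sum>z\<in>S. if z = y then K' x z else 0)"
    using y fin by simp
  also have "\<dots> = (\<Sum>z\<in>S. K' x z * (\<Sum>w\<in>S. M z w * K w y))"
    by (rule sum.cong) (simp_all add: right)
  also have "\<dots> = (\<Sum>z\<in>S. \<Sum>w\<in>S. K' x z * M z w * K w y)"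
    by (simp add: sum_distrib_left mult.assoc)
  also have "\<dots> = (\<Sum>w\<in>S. \<Sum>z\<in>S. K' x z * M z w * K w y)"
    by (rule sum.swap)
  also have "\<dots> = (\<Sum>w\<in>S. (\<Sum>z\<in>S. K' x z * M z w) * K w y)"
    by (simp add: sum_distrib_right)
  also have "\<dots> = (\<Sum>w\<in>S. if x = w then K w y else 0)"
    by (rule sum.cong) (simp_all add: left)
  also have "\<dots> = K x y"
    using x fin by simp
  finally show ?thesis by (simp add: K'_def)
qed

lemma inverse_on_block_diagonal:
  fixes B :: "'i \<Rightarrow> 'a set"
  assumes fin: "finite P" "\<And>p. p \<in> P \<Longrightarrow> finite (B p)"
    and disj: "disjoint_family_on B P"
    and off_diag: "\<And>p q x y. p \<in> P \<Longrightarrow> q \<in> P \<Longrightarrow> p \<noteq> q \<Longrightarrow> x \<in> B p \<Longrightarrow> y \<in> B q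
                    \<Longrightarrow> M x y = 0 \<and> K x y = 0"
    and blocks: "\<And>p. p \<in> P \<Longrightarrow> inverse_on (B p) M K"
  shows "inverse_on (\<Union>p\<in>P. B p) M K"
  unfolding inverse_on_def
proof (intro ballI)
  fix x y assume "x \<in> (\<Union>p\<in>P. B p)" "y \<in> (\<Union>p\<in>P. B p)"
  then obtain p q where p: "p \<in> P" "x \<in> B p" and q: "q \<in> P" "y \<in> B q" by blast
  have restrict: "(\<Sum>z\<in>(\<Union>p\<in>P. B p). F z) = (\<Sum>z\<in>B p. F z)"
    if "\<And>r z. r \<in> P \<Longrightarrow> r \<noteq> p \<Longrightarrow> z \<in> B r \<Longrightarrow> F z = 0" for F :: "'a \<Rightarrow> complex"
    using that p fin by (intro sum.mono_neutral_right) auto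
  have "(\<Sum>z\<in>(\<Union>p\<in>P. B p). M x z * K z y) = (\<Sum>z\<in>B p. M x z * K z y)"
    using off_diag p by (intro restrict) (metis mult_zero_left)
  moreover have "(\<Sum>z\<in>(\<Union>p\<in>P. B p). K x z * M z y) = (\<Sum>z\<in>B p. K x z * M z y)"
    using off_diag p by (intro restrict) (metis mult_zero_left)
  moreover have "(\<Sum>z\<in>B p. M x z * K z y) = (if x = y then 1 else 0)
      \<and> (\<Sum>z\<in>B p. K x z * M z y) = (if x = y then 1 else 0)"
  proof (cases "p = q")
    case True
    then show ?thesis using blocks p q unfolding inverse_on_def by blast
  next
    case False
    then have "x \<noteq> y" using disj p q by (auto simp: disjoint_family_on_def)
    then show ?thesis using off_diag[OF p(1) q(1) False] p(2) q(2) by simp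
  qed
  ultimately show "(\<Sum>z\<in>(\<Union>p\<in>P. B p). M x z * K z y) = (if x = y then 1 else 0)
      \<and> (\<Sum>z\<in>(\<Union>p\<in>P. B p). K x z * M z y) = (if x = y then 1 else 0)"
    by simp
qed

section \<open>The midpoint triangle of a cell\<close>

definition third :: "vtx \<Rightarrow> vtx \<Rightarrow> vtx" where
  "third x y = (let p = parent x in
     if x \<noteq> mid01 p \<and> y \<noteq> mid01 p then mid01 p
     else if x \<noteq> mid12 p \<and> y \<noteq> mid12 p then mid12 p else mid20 p)"

lemma third_simps:
  "third (mid01 p) (mid12 p) = mid20 p" "third (mid12 p) (mid01 p) = mid20 p"
  "third (mid12 p) (mid20 p) = mid01 p" "third (mid20 p) (mid12 p) = mid01 p"
  "third (mid01 p) (mid20 p) = mid12 p" "third (mid20 p) (mid01 p) = mid12 p"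
  using parent_mid_vertices[of _ p] by (auto simp: third_def mid_vertices_def Let_def)

lemma sum_mid_vertices: "(\<Sum>z\<in>mid_vertices p. f z) = f (mid01 p) + f (mid12 p) + f (mid20 p)"
  by (simp add: mid_vertices_def add.assoc)

definition local_block :: "conn \<Rightarrow> complex \<Rightarrow> vtx \<Rightarrow> vtx \<Rightarrow> complex" where
  "local_block W u x z = (if x = z then u else - (1/4) * W x z)"

(* d will be the determinant of local_block, and the numerators are its cofactors. *)
definition local_block_inv :: "conn \<Rightarrow> complex \<Rightarrow> complex \<Rightarrow> vtx \<Rightarrow> vtx \<Rightarrow> complex" where
  "local_block_inv W u d x y = (if x = y then (u^2 - 1/16) / d
      else (u/4 * W x y + 1/16 * W x (third x y) * W (third x y) y) / d)"

lemma inverse_on_local_block: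
  fixes W :: conn
  assumes inv: "W (mid12 p) (mid01 p) = inverse (W (mid01 p) (mid12 p))"
      "W (mid20 p) (mid12 p) = inverse (W (mid12 p) (mid20 p))"
      "W (mid01 p) (mid20 p) = inverse (W (mid20 p) (mid01 p))"
    and hol: "W (mid01 p) (mid12 p) * W (mid12 p) (mid20 p) * W (mid20 p) (mid01 p) = h"
    and "h \<noteq> 0"
    and d: "d = u^3 - 3*u/16 - (h + inverse h)/64" and "d \<noteq> 0"
  shows "inverse_on (mid_vertices p) (local_block W u) (local_block_inv W u d)"
proof -
  define s t r where "s = W (mid01 p) (mid12 p)" and "t = W (mid12 p) (mid20 p)"
    and "r = W (mid20 p) (mid01 p)"
  have h: "h = s * t * r" using hol by (simp add: s_def t_def r_def)
  then have nz: "s \<noteq> 0" "t \<noteq> 0" "r \<noteq> 0" using \<open>h \<noteq> 0\<close> by auto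
  have rel: "d * (s*t*r) * 64 = (64*u^3 - 12*u) * (s*t*r) - (s*t*r)^2 - 1"
    unfolding d h using nz by (simp add: field_simps power2_eq_square)
  show ?thesis
    unfolding inverse_on_def mid_vertices_def
    by (simp add: sum_mid_vertices[unfolded mid_vertices_def] local_block_def local_block_inv_def
        third_simps inv flip: s_def t_def r_def)
      (intro conjI; simp add: field_simps power2_eq_square nz \<open>d \<noteq> 0\<close>; use rel in algebra)
qed

(* Psi and A as Laurent polynomials in g = e^(2 pi i alpha) and h = e^(2 pi i beta), with u = 1 - lam. *)
definition Psi_gh :: "complex \<Rightarrow> complex \<Rightarrow> complex \<Rightarrow> complex" where
  "Psi_gh u g h = u^2 - 1/16 + u/4 * (2 * inverse g + inverse (g^2 * h))
                  + 1/16 * (inverse (g^2) + 2 * inverse (g * h))"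

definition A_gh :: "complex \<Rightarrow> complex \<Rightarrow> complex \<Rightarrow> complex" where
  "A_gh u g h = 16 * (u^2 - 1/16) + 2 * u * (g + inverse g) + (g * h + inverse (g * h)) / 2"

definition cell_schur_term :: "conn \<Rightarrow> complex \<Rightarrow> complex \<Rightarrow> complex \<Rightarrow> complex \<Rightarrow> vtx \<Rightarrow> vtx \<Rightarrow> complex"
  where "cell_schur_term \<omega> u d g h a b =
    (if a = b then A_gh u g h / (8 * d)
     else (if ccw_edge a b then Psi_gh u g h else Psi_gh u (inverse g) (inverse h)) / d
          * \<omega> (emb a) (mid a b) * \<omega> (mid a b) (emb b))"

lemma ball_cell_vertices: "(\<forall>a\<in>cell_vertices p. Q a) \<longleftrightarrow> Q p \<and> Q (plus_e1 p) \<and> Q (plus_e2 p)"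
  by (simp add: cell_vertices_eq)

lemma cell_vertex_simps:
  "mid p (plus_e1 p) = mid01 p" "mid (plus_e1 p) p = mid01 p"
  "mid (plus_e1 p) (plus_e2 p) = mid12 p" "mid (plus_e2 p) (plus_e1 p) = mid12 p"
  "mid p (plus_e2 p) = mid20 p" "mid (plus_e2 p) p = mid20 p"
  "ccw_edge p (plus_e1 p)" "\<not> ccw_edge (plus_e1 p) p"
  "ccw_edge (plus_e1 p) (plus_e2 p)" "\<not> ccw_edge (plus_e2 p) (plus_e1 p)"
  "ccw_edge (plus_e2 p) p" "\<not> ccw_edge p (plus_e2 p)"
  "p \<noteq> plus_e1 p" "plus_e1 p \<noteq> p" "p \<noteq> plus_e2 p" "plus_e2 p \<noteq> p"
  "plus_e1 p \<noteq> plus_e2 p" "plus_e2 p \<noteq> plus_e1 p"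
  by (auto simp: point_defs ccw_edge_def prod_eq_iff)

lemma lattice_nbr_refined_cell:
  "lattice_nbr (emb p) (mid01 p)" "\<not> lattice_nbr (emb p) (mid12 p)" "lattice_nbr (emb p) (mid20 p)"
  "lattice_nbr (emb (plus_e1 p)) (mid01 p)" "lattice_nbr (emb (plus_e1 p)) (mid12 p)"
  "\<not> lattice_nbr (emb (plus_e1 p)) (mid20 p)"
  "\<not> lattice_nbr (emb (plus_e2 p)) (mid01 p)" "lattice_nbr (emb (plus_e2 p)) (mid12 p)"
  "lattice_nbr (emb (plus_e2 p)) (mid20 p)"
  "lattice_nbr (mid01 p) (emb p)" "\<not> lattice_nbr (mid12 p) (emb p)" "lattice_nbr (mid20 p) (emb p)"
  "lattice_nbr (mid01 p) (emb (plus_e1 p))" "lattice_nbr (mid12 p) (emb (plus_e1 p))"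
  "\<not> lattice_nbr (mid20 p) (emb (plus_e1 p))"
  "\<not> lattice_nbr (mid01 p) (emb (plus_e2 p))" "lattice_nbr (mid12 p) (emb (plus_e2 p))"
  "lattice_nbr (mid20 p) (emb (plus_e2 p))"
  by (auto simp: lattice_nbr_def point_defs)

definition lap_shift :: "nat \<Rightarrow> conn \<Rightarrow> real \<Rightarrow> vtx \<Rightarrow> vtx \<Rightarrow> complex" where
  "lap_shift N \<omega> lam x y = mag_lap N \<omega> x y - (if x = y then complex_of_real lam else 0)"

definition lap_weight :: "nat \<Rightarrow> vtx \<Rightarrow> complex" where
  "lap_weight n x = (if x \<in> SG_V0 n then - (1/2) else - (1/4))"

lemma mag_lap_eq:
  "mag_lap n W x y = (if x = y then 1 else if SG_adj n x y then lap_weight n x * W x y else 0)"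
  by (simp add: mag_lap_def lap_weight_def)

lemma schur_compl_eq:
  "schur_compl N \<omega> lam x y = lap_shift N \<omega> lam x y -
     (\<Sum>z\<in>SG_V N - SG_Vold N. \<Sum>w\<in>SG_V N - SG_Vold N. lap_shift N \<omega> lam x z
        * mat_inv_on (SG_V N - SG_Vold N) (lap_shift N \<omega> lam) z w * lap_shift N \<omega> lam w y)"
proof -
  have "(\<lambda>u v. mag_lap N \<omega> u v - (if u = v then complex_of_real lam else 0)) = lap_shift N \<omega> lam"
    by (simp add: lap_shift_def[abs_def])
  then show ?thesis by (simp only: schur_compl_def Let_def)
qed

lemma mid_vertex_not_corner: "z \<in> mid_vertices p \<Longrightarrow> z \<notin> SG_V0 (Suc n)"
  using mid_vertices_not_emb SG_V0_Suc_in_range_emb by blast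

lemma lap_shift_mid_vertices:
  assumes "p \<in> SG_cells n" "x \<in> mid_vertices p" "z \<in> mid_vertices p"
  shows "lap_shift (Suc n) \<omega> lam x z = local_block \<omega> (of_real (1 - lam)) x z"
proof -
  have "lattice_nbr (mid01 p) (mid12 p)" "lattice_nbr (mid12 p) (mid20 p)"
    "lattice_nbr (mid20 p) (mid01 p)" "lattice_nbr (mid12 p) (mid01 p)"
    "lattice_nbr (mid20 p) (mid12 p)" "lattice_nbr (mid01 p) (mid20 p)"
    by (simp_all add: lattice_nbr_def point_defs)
  then have "lattice_nbr x z" if "x \<noteq> z"
    using assms(2,3) that by (auto simp: mid_vertices_def)
  then have "x \<noteq> z \<Longrightarrow> SG_adj (Suc n) x z"
    using assms by (simp add: SG_adj_mid_vertex_iff refined_cell_eq)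
  then show ?thesis
    using mid_vertex_not_corner[OF assms(2)]
    by (simp add: lap_shift_def mag_lap_def local_block_def)
qed

lemma lap_shift_between_mid_vertices:
  assumes "p \<in> SG_cells n" "q \<in> SG_cells n" "p \<noteq> q" "x \<in> mid_vertices p" "z \<in> mid_vertices q"
  shows "lap_shift (Suc n) \<omega> lam x z = 0"
proof -
  have "x \<notin> refined_cell q"
    using assms parent_mid_vertices new_vertex_in_refined_cell mid_vertices_not_emb by metis
  then have "\<not> SG_adj (Suc n) x z" using SG_adj_mid_vertex_iff[OF assms(2,5)] by blast
  moreover have "x \<noteq> z" using assms parent_mid_vertices by metis
  ultimately show ?thesis by (simp add: lap_shift_def mag_lap_def)
qed

lemma lap_shift_emb_mid_vertex:
  assumes "p \<in> SG_cells n" "z \<in> mid_vertices p"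
  shows "lap_shift (Suc n) \<omega> lam (emb a) z
           = (if a \<in> cell_vertices p \<and> lattice_nbr (emb a) z then lap_weight n a * \<omega> (emb a) z else 0)"
    and "lap_shift (Suc n) \<omega> lam z (emb a)
           = (if a \<in> cell_vertices p \<and> lattice_nbr z (emb a) then - (1/4) * \<omega> z (emb a) else 0)"
proof -
  have ne: "emb a \<noteq> z" using mid_vertices_not_emb[OF assms(2)] by blast
  have adj: "SG_adj (Suc n) (emb a) z \<longleftrightarrow> a \<in> cell_vertices p \<and> lattice_nbr (emb a) z"
    using SG_adj_mid_vertex_iff[OF assms] ne emb_in_refined_cell_iff by blast
  then show "lap_shift (Suc n) \<omega> lam (emb a) z
      = (if a \<in> cell_vertices p \<and> lattice_nbr (emb a) z then lap_weight n a * \<omega> (emb a) z else 0)"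
    using ne by (simp add: lap_shift_def mag_lap_eq lap_weight_def emb_in_SG_V0_Suc_iff)
  have "SG_adj (Suc n) z (emb a) \<longleftrightarrow> a \<in> cell_vertices p \<and> lattice_nbr z (emb a)"
    using adj SG_adj_sym lattice_nbr_sym by blast
  then show "lap_shift (Suc n) \<omega> lam z (emb a)
      = (if a \<in> cell_vertices p \<and> lattice_nbr z (emb a) then - (1/4) * \<omega> z (emb a) else 0)"
    using ne mid_vertex_not_corner[OF assms(2)] by (simp add: lap_shift_def mag_lap_def)
qed

lemma disjoint_family_on_mid_vertices: "disjoint_family_on mid_vertices S"
  unfolding disjoint_family_on_def using parent_mid_vertices by blast

definition new_vertices_inv :: "conn \<Rightarrow> complex \<Rightarrow> complex \<Rightarrow> vtx \<Rightarrow> vtx \<Rightarrow> complex" where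
  "new_vertices_inv W u d x y = (if parent x = parent y then local_block_inv W u d x y else 0)"

lemma sum_new_vertices:
  "(\<Sum>z\<in>SG_V (Suc n) - SG_Vold (Suc n). f z) = (\<Sum>p\<in>SG_cells n. \<Sum>z\<in>mid_vertices p. f z)"
  unfolding new_vertices_Suc
  by (rule sum.UNION_disjoint_family[OF finite_SG_cells _ disjoint_family_on_mid_vertices])
     (simp add: mid_vertices_def)

lemma refined_cell_adjacent:
  assumes "p \<in> SG_cells n"
  shows "SG_adj (Suc n) (mid01 p) (mid12 p)" "SG_adj (Suc n) (mid12 p) (mid20 p)"
    "SG_adj (Suc n) (mid20 p) (mid01 p)" "SG_adj (Suc n) (emb p) (mid01 p)"
    "SG_adj (Suc n) (mid20 p) (emb p)" "SG_adj (Suc n) (mid01 p) (emb (plus_e1 p))"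
    "SG_adj (Suc n) (emb (plus_e1 p)) (mid12 p)" "SG_adj (Suc n) (mid12 p) (emb (plus_e2 p))"
    "SG_adj (Suc n) (emb (plus_e2 p)) (mid20 p)"
  using assms unfolding SG_adj_Suc_iff
  by (auto simp: refined_cell_def lattice_nbr_def point_defs intro!: bexI[of _ p])

lemma U1_connection_inverse:
  "U1_connection n \<omega> \<Longrightarrow> SG_adj n x y \<Longrightarrow> \<omega> y x = inverse (\<omega> x y) \<and> \<omega> x y \<noteq> 0"
  unfolding U1_connection_def by (metis norm_zero zero_neq_one)

lemma holonomies_in_refined_cell:
  "up_holonomy \<omega> (emb p) = \<omega> (emb p) (mid01 p) * \<omega> (mid01 p) (mid20 p) * \<omega> (mid20 p) (emb p)"
  "up_holonomy \<omega> (mid01 p) = \<omega> (mid01 p) (emb (plus_e1 p)) * \<omega> (emb (plus_e1 p)) (mid12 p) * \<omega> (mid12 p) (mid01 p)"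
  "up_holonomy \<omega> (mid20 p) = \<omega> (mid20 p) (mid12 p) * \<omega> (mid12 p) (emb (plus_e2 p)) * \<omega> (emb (plus_e2 p)) (mid20 p)"
  "down_holonomy \<omega> (emb p) = \<omega> (mid01 p) (mid12 p) * \<omega> (mid12 p) (mid20 p) * \<omega> (mid20 p) (mid01 p)"
  by (simp_all add: up_holonomy_def down_holonomy_def Let_def point_defs mult_2)

section \<open>Connections with constant fluxes\<close>

context
  fixes n :: nat and \<omega> :: conn and g h :: complex
  assumes U: "U1_connection (Suc n) \<omega>"
    and up: "\<forall>q\<in>SG_cells (Suc n). up_holonomy \<omega> q = g"
    and down: "\<forall>q. is_down_triangle (Suc n) q \<longrightarrow> down_holonomy \<omega> q = h"
begin

lemma refined_cell_connection:
  assumes p: "p \<in> SG_cells n"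
  defines "P0 \<equiv> emb p" and "P1 \<equiv> emb (plus_e1 p)" and "P2 \<equiv> emb (plus_e2 p)"
    and "X \<equiv> mid01 p" and "Y \<equiv> mid12 p" and "Z \<equiv> mid20 p"
  shows "\<omega> Y X = inverse (\<omega> X Y)" "\<omega> Z Y = inverse (\<omega> Y Z)" "\<omega> X Z = inverse (\<omega> Z X)"
    "\<omega> X P0 = inverse (\<omega> P0 X)" "\<omega> P0 Z = inverse (\<omega> Z P0)" "\<omega> P1 X = inverse (\<omega> X P1)"
    "\<omega> Y P1 = inverse (\<omega> P1 Y)" "\<omega> P2 Y = inverse (\<omega> Y P2)" "\<omega> Z P2 = inverse (\<omega> P2 Z)"
  and "\<omega> X Y \<noteq> 0" "\<omega> Y Z \<noteq> 0" "\<omega> Z X \<noteq> 0" "\<omega> P0 X \<noteq> 0" "\<omega> Z P0 \<noteq> 0" "\<omega> X P1 \<noteq> 0"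
    "\<omega> P1 Y \<noteq> 0" "\<omega> Y P2 \<noteq> 0" "\<omega> P2 Z \<noteq> 0"
  and "\<omega> P0 X * \<omega> X Z * \<omega> Z P0 = g" "\<omega> X P1 * \<omega> P1 Y * \<omega> Y X = g"
    "\<omega> Z Y * \<omega> Y P2 * \<omega> P2 Z = g" "\<omega> X Y * \<omega> Y Z * \<omega> Z X = h"
proof -
  have children: "emb p \<in> SG_cells (Suc n)" "mid01 p \<in> SG_cells (Suc n)" "mid20 p \<in> SG_cells (Suc n)"
    using p by (auto simp: SG_cells_Suc_children children_def)
  have "is_down_triangle (Suc n) (emb p)"
    using refined_cell_adjacent[OF p] by (simp add: is_down_triangle_def Let_def point_defs mult_2)
  then have "down_holonomy \<omega> (emb p) = h" using down by blast
  note edges = refined_cell_adjacent[OF p, THEN U1_connection_inverse[OF U]]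
  show "\<omega> Y X = inverse (\<omega> X Y)" "\<omega> Z Y = inverse (\<omega> Y Z)" "\<omega> X Z = inverse (\<omega> Z X)"
    "\<omega> X P0 = inverse (\<omega> P0 X)" "\<omega> P0 Z = inverse (\<omega> Z P0)" "\<omega> P1 X = inverse (\<omega> X P1)"
    "\<omega> Y P1 = inverse (\<omega> P1 Y)" "\<omega> P2 Y = inverse (\<omega> Y P2)" "\<omega> Z P2 = inverse (\<omega> P2 Z)"
    "\<omega> X Y \<noteq> 0" "\<omega> Y Z \<noteq> 0" "\<omega> Z X \<noteq> 0" "\<omega> P0 X \<noteq> 0" "\<omega> Z P0 \<noteq> 0" "\<omega> X P1 \<noteq> 0"
    "\<omega> P1 Y \<noteq> 0" "\<omega> Y P2 \<noteq> 0" "\<omega> P2 Z \<noteq> 0"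
    using edges unfolding assms(2-7) by auto
  show "\<omega> P0 X * \<omega> X Z * \<omega> Z P0 = g" "\<omega> X P1 * \<omega> P1 Y * \<omega> Y X = g"
    "\<omega> Z Y * \<omega> Y P2 * \<omega> P2 Z = g" "\<omega> X Y * \<omega> Y Z * \<omega> Z X = h"
    using up children \<open>down_holonomy \<omega> (emb p) = h\<close>
    unfolding assms(2-7) by (auto simp: holonomies_in_refined_cell)
qed

lemma local_schur_sum:
  assumes p: "p \<in> SG_cells n" and "d \<noteq> 0"
  shows "\<forall>a\<in>cell_vertices p. \<forall>b\<in>cell_vertices p.
     (\<Sum>z\<in>mid_vertices p. \<Sum>w\<in>mid_vertices p.
        (if lattice_nbr (emb a) z then \<omega> (emb a) z else 0) * local_block_inv \<omega> u d z w
        * (if lattice_nbr w (emb b) then \<omega> w (emb b) else 0))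
     = cell_schur_term \<omega> u d g h a b"
proof -
  note facts = refined_cell_connection[OF p]
  define s t r where "s = \<omega> (mid01 p) (mid12 p)" and "t = \<omega> (mid12 p) (mid20 p)"
    and "r = \<omega> (mid20 p) (mid01 p)"
  define e0 e1 e2 where "e0 = \<omega> (emb p) (mid01 p)" and "e1 = \<omega> (mid01 p) (emb (plus_e1 p))"
    and "e2 = \<omega> (mid12 p) (emb (plus_e2 p))"
  have nz: "s \<noteq> 0" "t \<noteq> 0" "r \<noteq> 0" "e0 \<noteq> 0" "e1 \<noteq> 0" "e2 \<noteq> 0"
    using facts(10-18) by (auto simp: s_def t_def r_def e0_def e1_def e2_def)
  \<comment> \<open>the three up-holonomies determine the remaining three outer edges\<close>
  have outer: "\<omega> (mid20 p) (emb p) = g * r / e0" "\<omega> (emb (plus_e1 p)) (mid12 p) = g * s / e1"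
      "\<omega> (emb (plus_e2 p)) (mid20 p) = g * t / e2"
    using facts(1-9,19-21) nz
    by (simp_all add: s_def t_def r_def e0_def e1_def e2_def field_simps)
  have h: "h = s * t * r" using facts(22) by (simp add: s_def t_def r_def)
  have "g \<noteq> 0" using outer(1) facts(14) by auto
  show ?thesis
    unfolding ball_cell_vertices
    by (simp add: sum_mid_vertices cell_vertex_simps lattice_nbr_refined_cell local_block_inv_def
        third_simps cell_schur_term_def,
        simp add: facts(1-9) outer flip: s_def t_def r_def e0_def e1_def e2_def)
      (intro conjI;
        simp add: Psi_gh_def A_gh_def h field_simps nz \<open>g \<noteq> 0\<close> \<open>d \<noteq> 0\<close> power2_eq_square)
qed

lemma inverse_on_new_vertices:
  assumes d: "d = u^3 - 3*u/16 - (h + inverse h)/64" "d \<noteq> 0"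
    and u: "u = of_real (1 - lam)"
  shows "inverse_on (SG_V (Suc n) - SG_Vold (Suc n)) (lap_shift (Suc n) \<omega> lam) (new_vertices_inv \<omega> u d)"
  unfolding new_vertices_Suc
proof (rule inverse_on_block_diagonal)
  show "disjoint_family_on mid_vertices (SG_cells n)"
    by (rule disjoint_family_on_mid_vertices)
  fix p assume p: "p \<in> SG_cells n"
  note facts = refined_cell_connection[OF p]
  have "h \<noteq> 0" using facts(22) facts(10-12) by auto
  then have "inverse_on (mid_vertices p) (local_block \<omega> u) (local_block_inv \<omega> u d)"
    by (rule inverse_on_local_block[OF facts(1-3) facts(22) _ d])
  then show "inverse_on (mid_vertices p) (lap_shift (Suc n) \<omega> lam) (new_vertices_inv \<omega> u d)"
    using lap_shift_mid_vertices[OF p] parent_mid_vertices u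
    by (simp add: inverse_on_def new_vertices_inv_def cong: sum.cong)
next
  fix p q x y
  assume "p \<in> SG_cells n" "q \<in> SG_cells n" "p \<noteq> q" "x \<in> mid_vertices p" "y \<in> mid_vertices q"
  then show "lap_shift (Suc n) \<omega> lam x y = 0 \<and> new_vertices_inv \<omega> u d x y = 0"
    using lap_shift_between_mid_vertices parent_mid_vertices by (simp add: new_vertices_inv_def)
qed (auto simp: finite_SG_cells mid_vertices_def)

lemma schur_compl_cell_sum:
  assumes d: "d = u^3 - 3*u/16 - (h + inverse h)/64" "d \<noteq> 0"
    and u: "u = of_real (1 - lam)"
  shows "schur_compl (Suc n) \<omega> lam x y = lap_shift (Suc n) \<omega> lam x y
     - (\<Sum>p\<in>SG_cells n. \<Sum>z\<in>mid_vertices p. \<Sum>w\<in>mid_vertices p.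
          lap_shift (Suc n) \<omega> lam x z * local_block_inv \<omega> u d z w * lap_shift (Suc n) \<omega> lam w y)"
proof -
  let ?I = "SG_V (Suc n) - SG_Vold (Suc n)" and ?M = "lap_shift (Suc n) \<omega> lam"
  have "finite ?I" by (simp add: new_vertices_Suc finite_SG_cells mid_vertices_def)
  then have inv: "mat_inv_on ?I ?M z w = new_vertices_inv \<omega> u d z w" if "z \<in> ?I" "w \<in> ?I" for z w
    by (rule mat_inv_on_eqI[OF _ inverse_on_new_vertices[OF d u] that])
  have "(\<Sum>z\<in>?I. \<Sum>w\<in>?I. ?M x z * mat_inv_on ?I ?M z w * ?M w y)
      = (\<Sum>z\<in>?I. \<Sum>w\<in>?I. ?M x z * new_vertices_inv \<omega> u d z w * ?M w y)"
    by (intro sum.cong refl) (simp add: inv)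
  also have "\<dots> = (\<Sum>p\<in>SG_cells n. \<Sum>z\<in>mid_vertices p. \<Sum>q\<in>SG_cells n. \<Sum>w\<in>mid_vertices q.
      ?M x z * new_vertices_inv \<omega> u d z w * ?M w y)"
    by (simp only: sum_new_vertices)
  also have "\<dots> = (\<Sum>p\<in>SG_cells n. \<Sum>z\<in>mid_vertices p. \<Sum>w\<in>mid_vertices p.
      ?M x z * local_block_inv \<omega> u d z w * ?M w y)"
  proof (rule sum.cong[OF refl], rule sum.cong[OF refl])
    fix p z assume "p \<in> SG_cells n" "z \<in> mid_vertices p"
    then have "parent z = p" by (simp add: parent_mid_vertices)
    then have "(\<Sum>w\<in>mid_vertices q. ?M x z * new_vertices_inv \<omega> u d z w * ?M w y)
        = (if q = p then \<Sum>w\<in>mid_vertices p. ?M x z * local_block_inv \<omega> u d z w * ?M w y else 0)"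
      for q
      using parent_mid_vertices[of _ q] by (simp add: new_vertices_inv_def cong: sum.cong)
    then show "(\<Sum>q\<in>SG_cells n. \<Sum>w\<in>mid_vertices q. ?M x z * new_vertices_inv \<omega> u d z w * ?M w y)
        = (\<Sum>w\<in>mid_vertices p. ?M x z * local_block_inv \<omega> u d z w * ?M w y)"
      using \<open>p \<in> SG_cells n\<close> by (simp add: finite_SG_cells)
  qed
  finally show ?thesis by (simp only: schur_compl_eq)
qed

lemma cell_schur_sum:
  assumes p: "p \<in> SG_cells n" and "d \<noteq> 0"
  shows "(\<Sum>z\<in>mid_vertices p. \<Sum>w\<in>mid_vertices p.
      lap_shift (Suc n) \<omega> lam (emb a) z * local_block_inv \<omega> u d z w * lap_shift (Suc n) \<omega> lam w (emb b))
    = (if a \<in> cell_vertices p \<and> b \<in> cell_vertices p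
       then - lap_weight n a / 4 * cell_schur_term \<omega> u d g h a b else 0)"
proof (cases "a \<in> cell_vertices p \<and> b \<in> cell_vertices p")
  case True
  have "(\<Sum>z\<in>mid_vertices p. \<Sum>w\<in>mid_vertices p.
      lap_shift (Suc n) \<omega> lam (emb a) z * local_block_inv \<omega> u d z w * lap_shift (Suc n) \<omega> lam w (emb b))
    = (\<Sum>z\<in>mid_vertices p. \<Sum>w\<in>mid_vertices p. - lap_weight n a / 4 *
        ((if lattice_nbr (emb a) z then \<omega> (emb a) z else 0) * local_block_inv \<omega> u d z w
         * (if lattice_nbr w (emb b) then \<omega> w (emb b) else 0)))"
    using True by (intro sum.cong refl) (simp add: lap_shift_emb_mid_vertex[OF p])
  also have "\<dots> = - lap_weight n a / 4 * (\<Sum>z\<in>mid_vertices p. \<Sum>w\<in>mid_vertices p.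
        (if lattice_nbr (emb a) z then \<omega> (emb a) z else 0) * local_block_inv \<omega> u d z w
        * (if lattice_nbr w (emb b) then \<omega> w (emb b) else 0))"
    by (simp only: sum_distrib_left)
  also have "\<dots> = - lap_weight n a / 4 * cell_schur_term \<omega> u d g h a b"
    using local_schur_sum[OF p \<open>d \<noteq> 0\<close>] True by simp
  finally show ?thesis using True by simp
next
  case False
  then show ?thesis by (auto simp: lap_shift_emb_mid_vertex[OF p] intro!: sum.neutral)
qed

lemma schur_compl_emb:
  assumes d: "d = u^3 - 3*u/16 - (h + inverse h)/64" "d \<noteq> 0"
    and u: "u = of_real (1 - lam)"
    and a: "a \<in> SG_V n" and b: "b \<in> SG_V n"
  shows "schur_compl (Suc n) \<omega> lam (emb a) (emb b) =
    (if a = b then u - A_gh u g h / (64 * d)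
     else if SG_adj n a b then lap_weight n a / 4 * cell_schur_term \<omega> u d g h a b else 0)"
proof -
  let ?C = "{p \<in> SG_cells n. a \<in> cell_vertices p \<and> b \<in> cell_vertices p}"
  have "schur_compl (Suc n) \<omega> lam (emb a) (emb b) = lap_shift (Suc n) \<omega> lam (emb a) (emb b)
      - (\<Sum>p\<in>SG_cells n. if a \<in> cell_vertices p \<and> b \<in> cell_vertices p
                          then - lap_weight n a / 4 * cell_schur_term \<omega> u d g h a b else 0)"
    using cell_schur_sum[OF _ d(2)] by (simp add: schur_compl_cell_sum[OF d u])
  also have "\<dots> = lap_shift (Suc n) \<omega> lam (emb a) (emb b)
      + of_nat (card ?C) * lap_weight n a / 4 * cell_schur_term \<omega> u d g h a b"
    by (simp add: sum.If_cases finite_SG_cells Int_def)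
  finally have schur: "schur_compl (Suc n) \<omega> lam (emb a) (emb b) = \<dots>" .
  show ?thesis
  proof (cases "a = b")
    case True
    then show ?thesis
      using card_cells_containing[OF a] unfolding schur
      by (simp add: lap_shift_def mag_lap_def lap_weight_def cell_schur_term_def u field_simps)
  next
    case False
    then show ?thesis
      using card_cells_containing_edge[OF False, of n] emb_not_adjacent[OF False] unfolding schur
      by (simp add: lap_shift_def mag_lap_def emb_eq_iff)
  qed
qed

end

section \<open>Trigonometric form\<close>

lemma of_real_cos_exp:
  "complex_of_real (cos (2*pi*x))
     = (exp (2 * of_real pi * \<i> * of_real x) + inverse (exp (2 * of_real pi * \<i> * of_real x))) / 2"
proof -
  have "complex_of_real (cos (2*pi*x)) = cos (complex_of_real (2*pi*x))" by (simp only: cos_of_real)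
  also have "\<dots> = (exp (\<i> * complex_of_real (2*pi*x)) + exp (- (\<i> * complex_of_real (2*pi*x)))) / 2"
    by (rule cos_exp_eq)
  also have "\<i> * complex_of_real (2*pi*x) = 2 * of_real pi * \<i> * of_real x" by (simp add: algebra_simps)
  finally show ?thesis by (simp add: exp_minus)
qed

context
  fixes \<alpha> \<beta> lam :: real and u g h :: complex
  defines "u \<equiv> of_real (1 - lam)"
    and "g \<equiv> exp (2 * of_real pi * \<i> * of_real \<alpha>)" and "h \<equiv> exp (2 * of_real pi * \<i> * of_real \<beta>)"
begin

lemma exp_2pi_identities:
  "exp (- 2 * of_real pi * \<i> * of_real \<alpha>) = inverse g"
  "exp (- 2 * of_real pi * \<i> * of_real (2*\<alpha> + \<beta>)) = inverse (g^2 * h)"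
  "exp (- 4 * of_real pi * \<i> * of_real \<alpha>) = inverse (g^2)"
  "exp (- 2 * of_real pi * \<i> * of_real (\<alpha> + \<beta>)) = inverse (g * h)"
  "exp (2 * of_real pi * \<i> * of_real (\<alpha> + \<beta>)) = g * h"
  "cnj g = inverse g" "cnj h = inverse h"
proof -
  let ?a = "2 * of_real pi * \<i> * (of_real \<alpha> :: complex)"
  let ?b = "2 * of_real pi * \<i> * (of_real \<beta> :: complex)"
  have "- 2 * of_real pi * \<i> * of_real \<alpha> = - ?a"
    "- 2 * of_real pi * \<i> * of_real (2*\<alpha> + \<beta>) = - (?a + ?a + ?b)"
    "- 4 * of_real pi * \<i> * of_real \<alpha> = - (?a + ?a)"
    "- 2 * of_real pi * \<i> * of_real (\<alpha> + \<beta>) = - (?a + ?b)"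
    "2 * of_real pi * \<i> * of_real (\<alpha> + \<beta>) = ?a + ?b"
    by (simp_all add: algebra_simps)
  then show "exp (- 2 * of_real pi * \<i> * of_real \<alpha>) = inverse g"
    "exp (- 2 * of_real pi * \<i> * of_real (2*\<alpha> + \<beta>)) = inverse (g^2 * h)"
    "exp (- 4 * of_real pi * \<i> * of_real \<alpha>) = inverse (g^2)"
    "exp (- 2 * of_real pi * \<i> * of_real (\<alpha> + \<beta>)) = inverse (g * h)"
    "exp (2 * of_real pi * \<i> * of_real (\<alpha> + \<beta>)) = g * h"
    unfolding g_def h_def by (simp_all only: exp_minus exp_add) (simp_all add: power2_eq_square)
  show "cnj g = inverse g" "cnj h = inverse h"
    unfolding g_def h_def by (simp_all add: exp_cnj exp_minus[symmetric])
qed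

lemma D_fun_eq: "complex_of_real (D_fun \<beta> lam) = u^3 - 3*u/16 - (h + inverse h)/64"
proof -
  have "complex_of_real (D_fun \<beta> lam) = - (of_real lam ^ 3) + 3 * of_real lam ^ 2
      - 45/16 * of_real lam + 13/16 - 1/32 * complex_of_real (cos (2*pi*\<beta>))"
    by (simp add: D_fun_def)
  also have "complex_of_real (cos (2*pi*\<beta>)) = (h + inverse h)/2"
    unfolding h_def by (rule of_real_cos_exp)
  finally show ?thesis
    by (simp add: u_def field_simps power3_eq_cube power2_eq_square)
qed

lemma A_fun_eq: "complex_of_real (A_fun \<alpha> \<beta> lam) = A_gh u g h"
proof -
  have "complex_of_real (A_fun \<alpha> \<beta> lam) = 16 * of_real lam ^ 2
      - (32 + 4 * complex_of_real (cos (2*pi*\<alpha>))) * of_real lam + 15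
      + 4 * complex_of_real (cos (2*pi*\<alpha>)) + complex_of_real (cos (2*pi*(\<alpha> + \<beta>)))"
    by (simp add: A_fun_def)
  also have "complex_of_real (cos (2*pi*\<alpha>)) = (g + inverse g)/2"
    unfolding g_def by (rule of_real_cos_exp)
  also have "complex_of_real (cos (2*pi*(\<alpha> + \<beta>))) = (g*h + inverse (g*h))/2"
    unfolding exp_2pi_identities(5)[symmetric] by (rule of_real_cos_exp)
  also have "16 * of_real lam ^ 2 - (32 + 4 * ((g + inverse g)/2)) * of_real lam + 15
      + 4 * ((g + inverse g)/2) + (g*h + inverse (g*h))/2 = A_gh u g h"
    by (simp add: A_gh_def u_def field_simps power2_eq_square)
  finally show ?thesis .
qed

lemma Psi_fun_eq: "Psi_gh u g h = Psi_fun \<alpha> \<beta> lam"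
  unfolding Psi_fun_def Psi_gh_def exp_2pi_identities(1-4) u_def by simp

lemma Psi_fun_cnj: "Psi_gh u (inverse g) (inverse h) = cnj (Psi_fun \<alpha> \<beta> lam)"
  unfolding Psi_fun_eq[symmetric] Psi_gh_def u_def by (simp add: exp_2pi_identities(6,7))

end

lemma exp_arg02:
  assumes "P \<noteq> 0"
  shows "of_real (cmod P) * exp (2 * of_real pi * \<i> * of_real (arg02 P / (2 * pi))) = P"
    and "of_real (cmod P) * exp (- 2 * of_real pi * \<i> * of_real (arg02 P / (2 * pi))) = cnj P"
proof -
  have "2 * of_real pi * \<i> * complex_of_real (arg02 P / (2 * pi)) = \<i> * of_real (arg02 P)"
    by (simp add: field_simps)
  moreover have "cis (arg02 P) = cis (Arg P)"
    by (simp add: arg02_def cis_mult[symmetric])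
  ultimately have e: "exp (2 * of_real pi * \<i> * of_real (arg02 P / (2 * pi))) = cis (Arg P)"
    by (simp add: cis_conv_exp)
  then show "of_real (cmod P) * exp (2 * of_real pi * \<i> * of_real (arg02 P / (2 * pi))) = P"
    using assms by (simp add: cis_Arg sgn_eq)
  have "exp (- 2 * of_real pi * \<i> * of_real (arg02 P / (2 * pi)))
      = inverse (exp (2 * of_real pi * \<i> * of_real (arg02 P / (2 * pi))))"
    by (simp add: exp_minus[symmetric])
  also have "\<dots> = of_real (cmod P) / P"
    unfolding e using assms by (simp add: cis_Arg sgn_eq)
  finally have "of_real (cmod P) * exp (- 2 * of_real pi * \<i> * of_real (arg02 P / (2 * pi)))
      = of_real ((cmod P)\<^sup>2) / P"
    by (simp add: power2_eq_square)
  also have "\<dots> = cnj P"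
    unfolding complex_norm_square using assms by simp
  finally show "of_real (cmod P) * exp (- 2 * of_real pi * \<i> * of_real (arg02 P / (2 * pi))) = cnj P" .
qed

lemma Omega_eq:
  "Omega \<omega> \<theta> a b = \<omega> (emb a) (mid a b) * \<omega> (mid a b) (emb b) *
     (if ccw_edge a b then exp (2 * of_real pi * \<i> * of_real \<theta>) else exp (- 2 * of_real pi * \<i> * of_real \<theta>))"
  by (simp add: Omega_def Let_def mid_def)

lemma schur_compl_Psi:
  fixes \<omega> :: conn
  assumes U: "U1_connection (Suc n) \<omega>"
    and up: "\<forall>p\<in>SG_cells (Suc n). up_holonomy \<omega> p = exp (2 * of_real pi * \<i> * of_real \<alpha>)"
    and down: "\<forall>q. is_down_triangle (Suc n) q \<longrightarrow> down_holonomy \<omega> q = exp (2 * of_real pi * \<i> * of_real \<beta>)"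
    and D: "D_fun \<beta> lam \<noteq> 0"
    and a: "a \<in> SG_V n" and b: "b \<in> SG_V n"
  shows "schur_compl (Suc n) \<omega> lam (emb a) (emb b) =
    (if a = b then of_real (1 - lam) - of_real (A_fun \<alpha> \<beta> lam) / (64 * of_real (D_fun \<beta> lam))
     else if SG_adj n a b
     then lap_weight n a * (if ccw_edge a b then Psi_fun \<alpha> \<beta> lam else cnj (Psi_fun \<alpha> \<beta> lam))
          / (4 * of_real (D_fun \<beta> lam)) * \<omega> (emb a) (mid a b) * \<omega> (mid a b) (emb b)
     else 0)"
  using schur_compl_emb[OF U up down D_fun_eq _ refl a b] D
  unfolding cell_schur_term_def Psi_fun_eq Psi_fun_cnj A_fun_eq[symmetric]
  by (simp add: mult.assoc)

lemma schur_compl_factorization: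
  fixes \<omega> :: conn
  assumes U: "U1_connection (Suc n) \<omega>"
    and up: "\<forall>p\<in>SG_cells (Suc n). up_holonomy \<omega> p = exp (2 * of_real pi * \<i> * of_real \<alpha>)"
    and down: "\<forall>q. is_down_triangle (Suc n) q \<longrightarrow> down_holonomy \<omega> q = exp (2 * of_real pi * \<i> * of_real \<beta>)"
    and D: "D_fun \<beta> lam \<noteq> 0"
    and c: "c \<noteq> 0" "c * exp (2 * of_real pi * \<i> * of_real \<theta>) = Psi_fun \<alpha> \<beta> lam"
      "c * exp (- 2 * of_real pi * \<i> * of_real \<theta>) = cnj (Psi_fun \<alpha> \<beta> lam)"
    and a: "a \<in> SG_V n" and b: "b \<in> SG_V n"
  shows "schur_compl (Suc n) \<omega> lam (emb a) (emb b) = c / (4 * of_real (D_fun \<beta> lam)) *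
     (mag_lap n (Omega \<omega> \<theta>) a b
      - (if a = b then 1 + of_real (A_fun \<alpha> \<beta> lam - 64 * D_fun \<beta> lam * (1 - lam)) / (16 * c) else 0))"
  unfolding schur_compl_Psi[OF U up down D a b] c(3)[symmetric] unfolding c(2)[symmetric]
  using c(1) D by (simp add: mag_lap_eq Omega_eq field_simps)

theorem corollary3p2:
  fixes N :: nat and \<alpha> \<beta> lam :: real and \<omega> :: conn
  assumes "N \<ge> 1"
    and "U1_connection N \<omega>"
    and "\<forall>p\<in>SG_cells N. up_holonomy \<omega> p = exp (2 * of_real pi * \<i> * of_real \<alpha>)"
    and "\<forall>q. is_down_triangle N q \<longrightarrow> down_holonomy \<omega> q = exp (2 * of_real pi * \<i> * of_real \<beta>)"
    and "D_fun \<beta> lam \<noteq> 0"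
    and "Psi_fun \<alpha> \<beta> lam \<noteq> 0"
  shows
    "((\<forall>t::real. Im (Psi_fun \<alpha> \<beta> t) = 0) \<longrightarrow>
       (let \<phi> = Psi_fun \<alpha> \<beta> lam / (4 * of_real (D_fun \<beta> lam));
            R = 1 + of_real (A_fun \<alpha> \<beta> lam - 64 * D_fun \<beta> lam * (1 - lam)) / (16 * Psi_fun \<alpha> \<beta> lam)
        in \<forall>a\<in>SG_V (N - 1). \<forall>b\<in>SG_V (N - 1).
             schur_compl N \<omega> lam (emb a) (emb b)
               = \<phi> * (mag_lap (N - 1) (Omega \<omega> 0) a b - (if a = b then R else 0))))
     \<and>
     (\<not> (\<forall>t::real. Im (Psi_fun \<alpha> \<beta> t) = 0) \<longrightarrow>
       (let \<phi> = cmod (Psi_fun \<alpha> \<beta> lam) / (4 * D_fun \<beta> lam);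
            R = 1 + (A_fun \<alpha> \<beta> lam - 64 * D_fun \<beta> lam * (1 - lam)) / (16 * cmod (Psi_fun \<alpha> \<beta> lam));
            \<theta> = arg02 (Psi_fun \<alpha> \<beta> lam) / (2 * pi)
        in \<forall>a\<in>SG_V (N - 1). \<forall>b\<in>SG_V (N - 1).
             schur_compl N \<omega> lam (emb a) (emb b)
               = of_real \<phi> * (mag_lap (N - 1) (Omega \<omega> \<theta>) a b - (if a = b then of_real R else 0))))"
proof -
  obtain n where N: "N = Suc n" using assms(1) by (cases N) auto
  note factorization = schur_compl_factorization[OF assms(2-5)[unfolded N]]
  show ?thesis
    unfolding Let_def N diff_Suc_1
  proof (intro conjI impI ballI, goal_cases)
    case (1 a b)
    then show ?case
      using factorization[of "Psi_fun \<alpha> \<beta> lam" 0] assms(6) by (simp add: complex_eq_iff)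
  next
    case (2 a b)
    then show ?case
      using factorization[OF _ exp_arg02[OF assms(6)]] assms(6) by simp
  qed
qed

end
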